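(* Let $f,g:\mathbb{R}\to\mathbb{R}$ be $\mathcal{C}^2$ functions such that $f''(u)\ge c_0$ and $g''(u)\ge c_0$ for some $c_0>0$ and all $u\in\mathbb{R}$, and $f(u)>g(u)$ for all $u\in\mathbb{R}$. Let $u^-<u^+$ be real numbers (an upward jump) and $\theta^-,\theta^+\in\{0,1\}$, and let $$\lambda=\frac{[\theta^+f(u^+)+(1-\theta^+)g(u^+)]-[\theta^-f(u^-)+(1-\theta^-)g(u^-)]}{u^+-u^-}$$ be the Rankine–Hugoniot speed. Then the Lax admissibility conditions $$\theta^+f'(u^+)+(1-\theta^+)g'(u^+)\;\le\;\lambda\;\le\;\theta^-f'(u^-)+(1-\theta^-)g'(u^-)$$ are violated, i.e. at least one of these two inequalities fails.
   Context: This concerns jumps of weak solutions of the conservation law $u_t+[\theta(u_x)f(u)+(1-\theta(u_x))g(u)]_x=0$, where $\theta(s)=1$ for $s>0$ and $\theta(s)=0$ for $s<0$. A jump connects a left state $(u^-,\theta^-)$ to a right state $(u^+,\theta^+)$, traveling with the Rankine–Hugoniot speed $\lambda$ given in the claim. *)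

theory Defs
  imports "HOL-Analysis.Analysis"
begin

end

theory Submission
  imports Defs
begin

text \<open>
  Write \<open>h\<^sub>\<theta> = \<theta> f + (1 - \<theta>) g\<close>. Only strict convexity of \<open>f\<close> and \<open>g\<close> matters: a
  secant slope of a function with strictly increasing derivative lies strictly between the
  derivatives at its endpoints. If \<open>\<theta>\<^sup>- = \<theta>\<^sup>+\<close> this already gives \<open>\<lambda> < h\<^sub>\<theta>'(u\<^sup>+)\<close>.
  If the phase changes, \<open>f > g\<close> moves \<open>\<lambda>\<close> past the secant slope of \<open>g\<close>: for
  \<open>\<theta>\<^sup>- = 1, \<theta>\<^sup>+ = 0\<close> it gets smaller, so \<open>\<lambda> < g'(u\<^sup>+)\<close>; for \<open>\<theta>\<^sup>- = 0, \<theta>\<^sup>+ = 1\<close> it gets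
  larger, so \<open>\<lambda> > g'(u\<^sup>-)\<close>.
\<close>

lemma strict_mono_of_deriv_pos:
  fixes h h' :: "real \<Rightarrow> real"
  assumes "\<And>u. (h has_real_derivative h' u) (at u)"
    and "\<And>u. h' u > 0"
  shows "strict_mono h"
  using DERIV_pos_imp_increasing assms by (blast intro: strict_monoI)

lemma deriv_lt_secant_slope_lt_deriv:
  fixes h h' :: "real \<Rightarrow> real"
  assumes deriv: "\<And>u. (h has_real_derivative h' u) (at u)"
    and mono: "strict_mono h'"
    and "a < b"
  shows "h' a < (h b - h a) / (b - a)" and "(h b - h a) / (b - a) < h' b"
proof -
  obtain z where "a < z" "z < b" and z: "h b - h a = (b - a) * h' z"
    using MVT2[OF \<open>a < b\<close>] deriv by blast
  then have "(h b - h a) / (b - a) = h' z"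
    by simp
  with \<open>a < z\<close> \<open>z < b\<close> mono show "h' a < (h b - h a) / (b - a)" "(h b - h a) / (b - a) < h' b"
    by (simp_all add: strict_mono_less)
qed

theorem lemma2p1:
  fixes f f' f'' g g' g'' :: "real \<Rightarrow> real" and c0 um up thetam thetap :: real
  assumes f1: "\<And>u. (f has_real_derivative f' u) (at u)"
    and f2: "\<And>u. (f' has_real_derivative f'' u) (at u)"
    and f2c: "continuous_on UNIV f''"
    and g1: "\<And>u. (g has_real_derivative g' u) (at u)"
    and g2: "\<And>u. (g' has_real_derivative g'' u) (at u)"
    and g2c: "continuous_on UNIV g''"
    and c0: "c0 > 0"
    and fc: "\<And>u. f'' u \<ge> c0"
    and gc: "\<And>u. g'' u \<ge> c0"
    and fg: "\<And>u. f u > g u"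
    and jump: "um < up"
    and thetam: "thetam \<in> {0, 1}"
    and thetap: "thetap \<in> {0, 1}"
  shows "let lam = ((thetap * f up + (1 - thetap) * g up) - (thetam * f um + (1 - thetam) * g um)) / (up - um)
         in \<not> (thetap * f' up + (1 - thetap) * g' up \<le> lam \<and> lam \<le> thetam * f' um + (1 - thetam) * g' um)"
proof -
  have "strict_mono f'" "strict_mono g'"
    using strict_mono_of_deriv_pos c0 fc gc f2 g2 by (meson less_le_trans)+
  note f_slope = deriv_lt_secant_slope_lt_deriv[OF f1 \<open>strict_mono f'\<close> jump]
  note g_slope = deriv_lt_secant_slope_lt_deriv[OF g1 \<open>strict_mono g'\<close> jump]
  have "(g up - f um) / (up - um) < (g up - g um) / (up - um)"
    using fg[of um] jump by (simp add: divide_strict_right_mono)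
  moreover have "(g up - g um) / (up - um) < (f up - g um) / (up - um)"
    using fg[of up] jump by (simp add: divide_strict_right_mono)
  ultimately show ?thesis
    using thetam thetap f_slope g_slope by (auto simp: Let_def)
qed

end
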